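(* For all positive integers $a,b,c,d$ and every positive integer $t$, $$i((a,b,c,d),t)+i((b,a,d,c),t)=F(a+c,b+d,0,t)+F(a,b,0,t)\,F(c,d,0,t).$$
   Context: For $S,T\subseteq[n]$, write $T\le S$ if $|T|=|S|$ and the $i$-th smallest element of $T$ is at most the $i$-th smallest element of $S$ for each $i$. The Schubert matroid $\mathrm{SM}_n(S)$ is the matroid on $[n]$ with bases $\{T\subseteq[n]:T\le S\}$; $i(M,t)$ is the number of lattice points in the $t$-th dilate of the matroid polytope $\mathrm{conv}\{\sum_{b\in B}e_b: B\text{ a basis of }M\}$. For a sequence $r=(r_1,\dots,r_{2m})$ of integers with $r_1\ge0$, $r_i>0$ for $i\ge2$, let $n=\sum r_i$ and let $S\subseteq[n]$ have indicator vector $(0^{r_1},1^{r_2},\dots,0^{r_{2m-1}},1^{r_{2m}})$ ($x^p$ = $p$ consecutive copies of $x$); $i(r,t):=i(\mathrm{SM}_n(S),t)$. For integers $a,b\ge0$ with $a+b\ge1$, $c\in\mathbb Z$, $t\ge0$: $F(a,b,c,t)=\sum_{j=0}^{a+b}(-1)^j\binom{a+b}{j}\binom{(t+1)(b-j)+a+c-1}{a+b-1}$, with $\binom00=1$ and $\binom NK=0$ if $K<0$ or $N<K$. *)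

theory Defs
  imports "HOL-Analysis.Analysis"
begin

(* Vectors in R^n are modelled as functions nat => real, coordinates indexed by [n] = {1..n}. *)

definition indvec :: "nat set \<Rightarrow> (nat \<Rightarrow> real)" where
  "indvec B = (\<lambda>i. if i \<in> B then 1 else 0)"

definition conv_hull_fin :: "(nat \<Rightarrow> real) set \<Rightarrow> (nat \<Rightarrow> real) set" where
  "conv_hull_fin V = {x. \<exists>\<mu>. (\<forall>v\<in>V. 0 \<le> \<mu> v) \<and> (\<Sum>v\<in>V. \<mu> v) = 1 \<and>
                          (\<forall>i. x i = (\<Sum>v\<in>V. \<mu> v * v i))}"

definition matroid_polytope :: "nat set set \<Rightarrow> (nat \<Rightarrow> real) set" where
  "matroid_polytope Bs = conv_hull_fin (indvec ` Bs)"

definition ehr :: "nat \<Rightarrow> nat set set \<Rightarrow> nat \<Rightarrow> nat" where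
  "ehr n Bs t = card {x :: nat \<Rightarrow> int. (\<forall>i. i \<notin> {1..n} \<longrightarrow> x i = 0) \<and>
      (\<exists>y \<in> matroid_polytope Bs. \<forall>i. real_of_int (x i) = real t * y i)}"

definition gale_le :: "nat set \<Rightarrow> nat set \<Rightarrow> bool" where
  "gale_le T S \<longleftrightarrow> card T = card S \<and>
     (\<forall>i < card S. sorted_list_of_set T ! i \<le> sorted_list_of_set S ! i)"

definition schubert_bases :: "nat \<Rightarrow> nat set \<Rightarrow> nat set set" where
  "schubert_bases n S = {T. T \<subseteq> {1..n} \<and> gale_le T S}"

(* indicator word (0^{r_1}, 1^{r_2}, 0^{r_3}, ...) : block j (0-indexed) has entry odd j *)
definition rword :: "nat list \<Rightarrow> bool list" where
  "rword r = concat (map (\<lambda>j. replicate (r ! j) (odd j)) [0..<length r])"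

definition rset :: "nat list \<Rightarrow> nat set" where
  "rset r = {k. 1 \<le> k \<and> k \<le> length (rword r) \<and> rword r ! (k - 1)}"

definition ir :: "nat list \<Rightarrow> nat \<Rightarrow> nat" where
  "ir r t = ehr (sum_list r) (schubert_bases (sum_list r) (rset r)) t"

definition binz :: "int \<Rightarrow> int \<Rightarrow> int" where
  "binz N K = (if K < 0 \<or> N < K then 0 else int (nat N choose nat K))"

definition Ffun :: "nat \<Rightarrow> nat \<Rightarrow> int \<Rightarrow> nat \<Rightarrow> int" where
  "Ffun a b c t = (\<Sum>j = 0..a + b. (-1) ^ j * int ((a + b) choose j) *
      binz ((int t + 1) * (int b - int j) + int a + c - 1) (int a + int b - 1))"

end

theory Submission
  imports Defs
begin

text \<open>For the indicator word 0^a 1^b 0^c 1^d, the Gale condition T \<le> S only says that T has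
  b + d elements, at least b of them in [a+b]. The polytope of this matroid has the integer
  decomposition property (deal the units of a lattice point round-robin into t bases), so
  i((a,b,c,d),t) counts the x \<in> {0..t}^n of total t(b+d) whose first a+b coordinates sum to at
  least tb. The involution x_i \<mapsto> t - x_i turns the count for (b,a,d,c) into the same count
  with "at most tb". Together the two cover every point of total t(b+d), counted by
  F(a+c,b+d,0,t), and count twice the points with equality, which split into two independent
  blocks counted by F(a,b,0,t) F(c,d,0,t). Here F(a,b,0,t) is the coefficient of X^(tb) in
  (1 + X + ... + X^t)^(a+b).\<close>

section \<open>Gale order for two blocks\<close>

lemma sorted_wrt_less_nth_gap:
  assumes "sorted_wrt (<) (xs :: nat list)" "i \<le> j" "j < length xs"
  shows "xs ! i + (j - i) \<le> xs ! j"
  using assms(2,3)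
proof (induction j rule: dec_induct)
  case (step j)
  have "xs ! j < xs ! Suc j"
    using assms(1) step.prems sorted_wrt_nth_less by fastforce
  with step show ?case by simp
qed simp

lemma nth_sorted_list_of_set_le_iff:
  assumes T: "finite T" and k: "k < card T"
  shows "sorted_list_of_set T ! k \<le> m \<longleftrightarrow> k < card {x \<in> T. x \<le> m}"
proof -
  define xs where "xs = sorted_list_of_set T"
  have len: "length xs = card T" and set: "set xs = T" and dist: "distinct xs"
    and sorted: "sorted xs"
    using T unfolding xs_def by simp_all
  have inj: "inj_on (\<lambda>i. xs ! i) {..<card T}"
    using dist len by (auto simp: inj_on_def nth_eq_iff_index_eq)
  show ?thesis unfolding xs_def[symmetric]
  proof
    assume le: "xs ! k \<le> m"
    have "(\<lambda>i. xs ! i) ` {..k} \<subseteq> {x \<in> T. x \<le> m}"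
      using le k len set sorted by (auto intro: order.trans[OF sorted_nth_mono])
    moreover have "inj_on (\<lambda>i. xs ! i) {..k}"
      using k by (intro inj_on_subset[OF inj]) auto
    ultimately have "card {..k} \<le> card {x \<in> T. x \<le> m}"
      using T by (intro card_inj_on_le) auto
    then show "k < card {x \<in> T. x \<le> m}" by simp
  next
    assume k_lt: "k < card {x \<in> T. x \<le> m}"
    show "xs ! k \<le> m"
    proof (rule ccontr)
      assume "\<not> xs ! k \<le> m"
      then have big: "m < xs ! j" if "k \<le> j" "j < card T" for j
        using sorted_nth_mono[OF sorted that(1)] that(2) len by simp
      have "{x \<in> T. x \<le> m} \<subseteq> (\<lambda>i. xs ! i) ` {..<k}"
      proof
        fix x assume x: "x \<in> {x \<in> T. x \<le> m}"
        then obtain j where "j < card T" "x = xs ! j"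
          using set len by (auto simp: in_set_conv_nth)
        moreover have "j < k"
          using x big[of j] \<open>j < card T\<close> \<open>x = xs ! j\<close> by (cases "k \<le> j") auto
        ultimately show "x \<in> (\<lambda>i. xs ! i) ` {..<k}" by blast
      qed
      then have "card {x \<in> T. x \<le> m} \<le> card ((\<lambda>i. xs ! i) ` {..<k})"
        by (intro card_mono) auto
      also have "\<dots> \<le> k"
        using card_image_le[of "{..<k}" "\<lambda>i. xs ! i"] by simp
      finally show False using k_lt by simp
    qed
  qed
qed

lemma sorted_list_of_set_two_blocks:
  "sorted_list_of_set ({a+1..a+b} \<union> {a+b+c+1..a+b+c+d}) = [a+1..<a+b+1] @ [a+b+c+1..<a+b+c+d+1]"
proof -
  have "sorted ([a+1..<a+b+1] @ [a+b+c+1..<a+b+c+d+1])"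
    and "distinct ([a+1..<a+b+1] @ [a+b+c+1..<a+b+c+d+1])"
    by (auto simp: sorted_append)
  moreover have "set ([a+1..<a+b+1] @ [a+b+c+1..<a+b+c+d+1]) = {a+1..a+b} \<union> {a+b+c+1..a+b+c+d}"
    by auto
  ultimately show ?thesis by (metis sorted_list_of_set.idem_if_sorted_distinct)
qed

lemma card_two_blocks: "card ({a+1..a+b} \<union> {a+b+c+1..a+b+c+d}) = b + d"
  by (subst card_Un_disjoint) auto

lemma gale_le_two_blocks_iff_pivot:
  assumes T: "T \<subseteq> {1..a+b+c+d}" and b: "0 < b" and card: "card T = b + d"
  shows "gale_le T ({a+1..a+b} \<union> {a+b+c+1..a+b+c+d}) \<longleftrightarrow> sorted_list_of_set T ! (b - 1) \<le> a + b"
proof -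
  define S where "S = {a+1..a+b} \<union> {a+b+c+1..a+b+c+d}"
  define xs where "xs = sorted_list_of_set T"
  have S_nth: "sorted_list_of_set S ! i = (if i < b then a + 1 + i else a + b + c + 1 + (i - b))"
    if "i < b + d" for i
    using that unfolding S_def sorted_list_of_set_two_blocks by (auto simp: nth_append)
  have sorted: "sorted_wrt (<) xs" and len: "length xs = b + d"
    unfolding xs_def by (simp_all add: card)
  have "(\<forall>i < b + d. xs ! i \<le> sorted_list_of_set S ! i) \<longleftrightarrow> xs ! (b - 1) \<le> a + b"
  proof
    assume "\<forall>i < b + d. xs ! i \<le> sorted_list_of_set S ! i"
    then have "xs ! (b - 1) \<le> sorted_list_of_set S ! (b - 1)" using b by simp
    then show "xs ! (b - 1) \<le> a + b" using S_nth[of "b - 1"] b by simp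
  next
    assume pivot: "xs ! (b - 1) \<le> a + b"
    have "xs ! (b + d - 1) \<in> set xs" using len b by (intro nth_mem) simp
    also have "set xs = T" using finite_subset[OF T] unfolding xs_def by simp
    finally have last: "xs ! (b + d - 1) \<le> a + b + c + d" using T by auto
    show "\<forall>i < b + d. xs ! i \<le> sorted_list_of_set S ! i"
    proof (intro allI impI)
      fix i assume i: "i < b + d"
      show "xs ! i \<le> sorted_list_of_set S ! i"
      proof (cases "i < b")
        case True
        then have "xs ! i + (b - 1 - i) \<le> xs ! (b - 1)"
          using sorted_wrt_less_nth_gap[OF sorted, of i "b - 1"] len by simp
        then show ?thesis using S_nth[OF i] pivot True by simp
      next
        case False
        have "xs ! i + (b + d - 1 - i) \<le> xs ! (b + d - 1)"
          using sorted_wrt_less_nth_gap[OF sorted, of i "b + d - 1"] i len by simp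
        then show ?thesis using S_nth[OF i] last i False by simp
      qed
    qed
  qed
  then show ?thesis using card card_two_blocks unfolding gale_le_def xs_def S_def by simp
qed

lemma gale_le_two_blocks_iff:
  assumes T: "T \<subseteq> {1..a+b+c+d}" and b: "0 < b"
  shows "gale_le T ({a+1..a+b} \<union> {a+b+c+1..a+b+c+d})
           \<longleftrightarrow> card T = b + d \<and> b \<le> card (T \<inter> {1..a+b})"
proof (cases "card T = b + d")
  case card: True
  have "sorted_list_of_set T ! (b - 1) \<le> a + b \<longleftrightarrow> b - 1 < card {x \<in> T. x \<le> a + b}"
    using nth_sorted_list_of_set_le_iff[OF finite_subset[OF T]] card b by simp
  also have "{x \<in> T. x \<le> a + b} = T \<inter> {1..a+b}" using T by auto
  finally show ?thesis using gale_le_two_blocks_iff_pivot[OF T b card] card b by linarith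
next
  case False
  have "card T \<noteq> card ({a+1..a+b} \<union> {a+b+c+1..a+b+c+d})"
    unfolding card_two_blocks by (rule False)
  with False show ?thesis unfolding gale_le_def by blast
qed

definition prefix_rank_bases :: "nat \<Rightarrow> nat \<Rightarrow> nat \<Rightarrow> nat \<Rightarrow> nat set set" where
  "prefix_rank_bases n k m b = {T. T \<subseteq> {1..n} \<and> card T = k \<and> b \<le> card (T \<inter> {1..m})}"

lemma rset_two_blocks: "rset [a, b, c, d] = {a+1..a+b} \<union> {a+b+c+1..a+b+c+d}"
proof -
  have "rword [a, b, c, d] =
      replicate a False @ replicate b True @ replicate c False @ replicate d True"
    by (simp add: rword_def upt_rec)
  then show ?thesis unfolding rset_def by (auto simp: nth_append split: if_splits)
qed

lemma schubert_bases_two_blocks: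
  assumes "0 < b"
  shows "schubert_bases (a+b+c+d) (rset [a, b, c, d]) = prefix_rank_bases (a+b+c+d) (b+d) (a+b) b"
  unfolding schubert_bases_def prefix_rank_bases_def rset_two_blocks
  using gale_le_two_blocks_iff[OF _ assms] by blast

section \<open>Lattice points of the dilated matroid polytope\<close>

definition int_cube :: "nat set \<Rightarrow> nat \<Rightarrow> (nat \<Rightarrow> int) set" where
  "int_cube I t = {x. (\<forall>i. i \<notin> I \<longrightarrow> x i = 0) \<and> (\<forall>i\<in>I. 0 \<le> x i \<and> x i \<le> int t)}"

lemma sum_indvec: "finite I \<Longrightarrow> sum (indvec T) I = real (card (T \<inter> I))"
  unfolding indvec_def by (simp add: sum.If_cases Int_commute)

lemma conv_hull_fin_sum_eq:
  assumes "y \<in> conv_hull_fin V"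
  obtains \<mu> where "\<forall>v\<in>V. 0 \<le> \<mu> v" "(\<Sum>v\<in>V. \<mu> v) = 1"
    "\<And>I. (\<Sum>i\<in>I. y i) = (\<Sum>v\<in>V. \<mu> v * (\<Sum>i\<in>I. v i))"
proof -
  obtain \<mu> where "\<forall>v\<in>V. 0 \<le> \<mu> v" "(\<Sum>v\<in>V. \<mu> v) = 1" and y: "\<forall>i. y i = (\<Sum>v\<in>V. \<mu> v * v i)"
    using assms unfolding conv_hull_fin_def by blast
  moreover have "(\<Sum>i\<in>I. y i) = (\<Sum>v\<in>V. \<mu> v * (\<Sum>i\<in>I. v i))" for I
  proof -
    have "(\<Sum>i\<in>I. y i) = (\<Sum>i\<in>I. \<Sum>v\<in>V. \<mu> v * v i)" using y by simp
    also have "\<dots> = (\<Sum>v\<in>V. \<Sum>i\<in>I. \<mu> v * v i)" by (rule sum.swap)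
    finally show ?thesis by (simp add: sum_distrib_left)
  qed
  ultimately show thesis using that by blast
qed

lemma conv_hull_fin_sum_ge:
  assumes "y \<in> conv_hull_fin V" "\<And>v. v \<in> V \<Longrightarrow> c \<le> (\<Sum>i\<in>I. v i)"
  shows "c \<le> (\<Sum>i\<in>I. y i)"
proof -
  obtain \<mu> where \<mu>: "\<forall>v\<in>V. 0 \<le> \<mu> v" "(\<Sum>v\<in>V. \<mu> v) = 1"
    and y: "(\<Sum>i\<in>I. y i) = (\<Sum>v\<in>V. \<mu> v * (\<Sum>i\<in>I. v i))"
    using conv_hull_fin_sum_eq[OF assms(1)] by metis
  have "c = (\<Sum>v\<in>V. \<mu> v * c)" using \<mu>(2) by (simp add: sum_distrib_right[symmetric])
  also have "\<dots> \<le> (\<Sum>i\<in>I. y i)"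
    unfolding y using \<mu>(1) assms(2) by (intro sum_mono mult_left_mono) auto
  finally show ?thesis .
qed

lemma conv_hull_fin_sum_le:
  assumes "y \<in> conv_hull_fin V" "\<And>v. v \<in> V \<Longrightarrow> (\<Sum>i\<in>I. v i) \<le> c"
  shows "(\<Sum>i\<in>I. y i) \<le> c"
proof -
  obtain \<mu> where \<mu>: "\<forall>v\<in>V. 0 \<le> \<mu> v" "(\<Sum>v\<in>V. \<mu> v) = 1"
    and y: "(\<Sum>i\<in>I. y i) = (\<Sum>v\<in>V. \<mu> v * (\<Sum>i\<in>I. v i))"
    using conv_hull_fin_sum_eq[OF assms(1)] by metis
  have "(\<Sum>i\<in>I. y i) \<le> (\<Sum>v\<in>V. \<mu> v * c)"
    unfolding y using \<mu>(1) assms(2) by (intro sum_mono mult_left_mono) auto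
  also have "\<dots> = c" using \<mu>(2) by (simp add: sum_distrib_right[symmetric])
  finally show ?thesis .
qed

lemma average_in_conv_hull_fin:
  assumes t: "0 < t" and V: "finite V" "g ` {..<t} \<subseteq> V"
  shows "(\<lambda>i. (\<Sum>s<t. g s i) / real t) \<in> conv_hull_fin V"
proof -
  define \<mu> where "\<mu> v = real (card {s \<in> {..<t}. g s = v}) / real t" for v
  have "(\<Sum>v\<in>V. \<mu> v * v i) = (\<Sum>s<t. g s i) / real t" for i
  proof -
    have "(\<Sum>v\<in>V. \<mu> v * v i) = (\<Sum>v\<in>V. \<Sum>s\<in>{s \<in> {..<t}. g s = v}. g s i) / real t"
      unfolding \<mu>_def by (simp add: sum_divide_distrib)
    also have "\<dots> = (\<Sum>s<t. g s i) / real t"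
      using sum.group[OF _ V, of "\<lambda>s. g s i"] by simp
    finally show ?thesis .
  qed
  moreover have "(\<Sum>v\<in>V. \<mu> v) = 1"
    using sum.group[OF _ V, of "\<lambda>_. 1 :: real"] t
    by (simp add: \<mu>_def sum_divide_distrib[symmetric])
  ultimately show ?thesis
    unfolding conv_hull_fin_def mem_Collect_eq by (intro exI[of _ \<mu>]) (simp add: \<mu>_def)
qed

lemma lattice_point_of_dilate_in_int_cube:
  assumes y: "y \<in> matroid_polytope (prefix_rank_bases n k m b)"
    and xy: "\<forall>i. real_of_int (x i) = real t * y i"
    and x0: "\<forall>i. i \<notin> {1..n} \<longrightarrow> x i = 0"
  shows "x \<in> int_cube {1..n} t \<and> sum x {1..n} = int (t * k) \<and> int (t * b) \<le> sum x {1..m}"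
proof -
  have y: "y \<in> conv_hull_fin (indvec ` prefix_rank_bases n k m b)"
    using y unfolding matroid_polytope_def .
  have base: "sum (indvec T) {1..n} = real k" "real b \<le> sum (indvec T) {1..m}"
    if "T \<in> prefix_rank_bases n k m b" for T
    using that unfolding prefix_rank_bases_def by (auto simp: sum_indvec Int_absorb2)
  have sum_x: "real_of_int (sum x I) = real t * sum y I" for I
    using xy by (simp add: sum_distrib_left)
  have y01: "0 \<le> y i \<and> y i \<le> 1" for i
  proof -
    have "0 \<le> v i \<and> v i \<le> 1" if "v \<in> indvec ` prefix_rank_bases n k m b" for v
      using that by (auto simp: indvec_def)
    then show ?thesis
      using conv_hull_fin_sum_ge[OF y, of 0 "{i}"] conv_hull_fin_sum_le[OF y, of "{i}" 1] by simp
  qed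
  have "0 \<le> x i \<and> x i \<le> int t" for i
  proof -
    have "0 \<le> real_of_int (x i)" "real_of_int (x i) \<le> real_of_int (int t)"
      using xy y01[of i] by (simp_all add: mult_left_le)
    then show ?thesis by simp
  qed
  moreover have "sum x {1..n} = int (t * k)"
  proof -
    have "real k \<le> sum y {1..n}" "sum y {1..n} \<le> real k"
      by (rule conv_hull_fin_sum_ge[OF y] conv_hull_fin_sum_le[OF y], use base in auto)+
    then have "real_of_int (sum x {1..n}) = real_of_int (int (t * k))"
      using sum_x[of "{1..n}"] by (simp del: of_int_sum)
    then show ?thesis by (simp only: of_int_eq_iff)
  qed
  moreover have "int (t * b) \<le> sum x {1..m}"
  proof -
    have "real b \<le> sum y {1..m}"
      by (rule conv_hull_fin_sum_ge[OF y]) (use base in auto)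
    then have "real_of_int (int (t * b)) \<le> real_of_int (sum x {1..m})"
      using sum_x[of "{1..m}"] by (simp add: mult_left_mono del: of_int_sum)
    then show ?thesis by (simp only: of_int_le_iff)
  qed
  ultimately show ?thesis using x0 by (auto simp: int_cube_def)
qed

lemma inj_on_mod_interval:
  assumes "l \<le> t"
  shows "inj_on (\<lambda>j::nat. j mod t) {c..<c + l}"
proof (rule linorder_inj_onI')
  fix j j' assume "j \<in> {c..<c + l}" "j' \<in> {c..<c + l}" "j < j'"
  then have "0 < j' - j" "j' - j < t" using assms by auto
  then have "\<not> t dvd j' - j" by (auto dest: dvd_imp_le)
  then show "j mod t \<noteq> j' mod t"
    using mod_eq_dvd_iff_nat[of j j' t] \<open>j < j'\<close> by simp
qed

lemma card_residue_class_below_mult: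
  assumes "s < t"
  shows "card {j::nat. j < t * q \<and> j mod t = s} = q"
proof -
  have "{j::nat. j < t * q \<and> j mod t = s} = (\<lambda>u. u * t + s) ` {..<q}"
  proof (intro set_eqI iffI)
    fix j assume j: "j \<in> {j. j < t * q \<and> j mod t = s}"
    then have "j = (j div t) * t + s" using div_mult_mod_eq[of j t] by simp
    moreover have "j div t < q" using j by (simp add: less_mult_imp_div_less mult.commute)
    ultimately show "j \<in> (\<lambda>u. u * t + s) ` {..<q}" by blast
  next
    fix j assume "j \<in> (\<lambda>u. u * t + s) ` {..<q}"
    then obtain u where u: "u < q" "j = u * t + s" by auto
    have "u * t + s < (u + 1) * t" using assms by simp
    also have "\<dots> \<le> q * t" using u by (intro mult_le_mono1) simp
    finally show "j \<in> {j. j < t * q \<and> j mod t = s}" using u assms by (simp add: mult.commute)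
  qed
  moreover have "inj_on (\<lambda>u. u * t + s) {..<q}" using assms by (auto simp: inj_on_def)
  ultimately show ?thesis by (simp add: card_image)
qed

lemma card_residue_class_below_ge:
  assumes "s < t" "t * q \<le> c"
  shows "q \<le> card {j::nat. j < c \<and> j mod t = s}"
proof -
  have "card {j::nat. j < t * q \<and> j mod t = s} \<le> card {j::nat. j < c \<and> j mod t = s}"
    using assms by (intro card_mono) auto
  then show ?thesis using card_residue_class_below_mult[OF assms(1)] by simp
qed

text \<open>Lay out x_1 copies of 1, then x_2 copies of 2, and so on, and deal the entries
  round-robin into t piles; pile s is \<open>cyclic_part x t n s\<close>. As every x_i \<le> t, no pile
  receives an index twice.\<close>

definition cyclic_part :: "(nat \<Rightarrow> nat) \<Rightarrow> nat \<Rightarrow> nat \<Rightarrow> nat \<Rightarrow> nat set" where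
  "cyclic_part x t n s =
     {i \<in> {1..n}. \<exists>j \<in> {(\<Sum>k=1..i-1. x k)..<(\<Sum>k=1..i. x k)}. j mod t = s}"

lemma card_cyclic_part_prefix:
  assumes x: "\<forall>i\<in>{1..n}. x i \<le> t" and "i \<le> n"
  shows "card (cyclic_part x t n s \<inter> {1..i}) = card {j. j < (\<Sum>k=1..i. x k) \<and> j mod t = s}"
  using \<open>i \<le> n\<close>
proof (induction i)
  case (Suc i)
  define C where "C = (\<Sum>k=1..i. x k)"
  define W where "W = {j \<in> {C..<C + x (Suc i)}. j mod t = s}"
  have C_Suc: "(\<Sum>k=1..Suc i. x k) = C + x (Suc i)" unfolding C_def by simp
  have split: "{j. j < C + x (Suc i) \<and> j mod t = s} = {j. j < C \<and> j mod t = s} \<union> W"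
    unfolding W_def by auto
  have "card ({j. j < C \<and> j mod t = s} \<union> W) = card {j. j < C \<and> j mod t = s} + card W"
    by (rule card_Un_disjoint) (auto simp: W_def)
  then have count: "card {j. j < C + x (Suc i) \<and> j mod t = s}
      = card {j. j < C \<and> j mod t = s} + card W"
    unfolding split .
  have "inj_on (\<lambda>j. j mod t) W"
    using inj_on_mod_interval[of "x (Suc i)" t C] x Suc.prems
    by (rule_tac inj_on_subset) (auto simp: W_def)
  then have "card W \<le> card {s}"
    by (rule card_inj_on_le) (auto simp: W_def)
  moreover have "W \<noteq> {} \<Longrightarrow> 0 < card W" by (simp add: W_def card_gt_0_iff)
  moreover have "Suc i \<in> cyclic_part x t n s \<longleftrightarrow> W \<noteq> {}"
    using Suc.prems unfolding cyclic_part_def W_def C_def by auto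
  ultimately have "card (cyclic_part x t n s \<inter> {Suc i}) = card W"
    by (cases "W = {}") auto
  moreover have "cyclic_part x t n s \<inter> {1..Suc i}
      = (cyclic_part x t n s \<inter> {1..i}) \<union> (cyclic_part x t n s \<inter> {Suc i})"
    by auto
  then have "card (cyclic_part x t n s \<inter> {1..Suc i})
      = card (cyclic_part x t n s \<inter> {1..i}) + card (cyclic_part x t n s \<inter> {Suc i})"
    by (simp only:) (rule card_Un_disjoint, auto)
  ultimately show ?case
    using Suc count unfolding C_Suc by (simp add: C_def)
qed simp

lemma card_cyclic_part_member:
  assumes t: "0 < t" and x: "\<forall>i\<in>{1..n}. x i \<le> t" and i: "i \<in> {1..n}"
  shows "card {s \<in> {..<t}. i \<in> cyclic_part x t n s} = x i"
proof -
  define C where "C = (\<Sum>k=1..i-1. x k)"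
  have C_i: "(\<Sum>k=1..i. x k) = C + x i"
    using i unfolding C_def by (cases i) auto
  have "i \<in> cyclic_part x t n s \<longleftrightarrow> (\<exists>j\<in>{C..<C + x i}. j mod t = s)" for s
    using i unfolding cyclic_part_def mem_Collect_eq C_i C_def[symmetric] by simp
  then have "{s \<in> {..<t}. i \<in> cyclic_part x t n s} = (\<lambda>j. j mod t) ` {C..<C + x i}"
    using t by auto
  moreover have "inj_on (\<lambda>j. j mod t) {C..<C + x i}"
    using x i by (intro inj_on_mod_interval) auto
  ultimately show ?thesis by (simp add: card_image)
qed

lemma int_cube_point_in_dilate:
  assumes t: "0 < t" and m: "m \<le> n" and x: "x \<in> int_cube {1..n} t"
    and sum_n: "sum x {1..n} = int (t * k)" and sum_m: "int (t * b) \<le> sum x {1..m}"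
  shows "\<exists>y \<in> matroid_polytope (prefix_rank_bases n k m b). \<forall>i. real_of_int (x i) = real t * y i"
proof -
  define x' where "x' i = nat (x i)" for i
  define A where "A = cyclic_part x' t n"
  have x0: "x i = 0" if "i \<notin> {1..n}" for i using x that unfolding int_cube_def by auto
  have x_eq: "x i = int (x' i)" for i using x unfolding int_cube_def x'_def by (cases "i \<in> {1..n}") auto
  have x'_le: "\<forall>i\<in>{1..n}. x' i \<le> t" using x unfolding int_cube_def x'_def by auto
  have prefix: "int (\<Sum>k=1..j. x' k) = sum x {1..j}" for j by (simp add: x_eq)
  have A_base: "A s \<in> prefix_rank_bases n k m b" if s: "s < t" for s
  proof -
    have sub: "A s \<subseteq> {1..n}" unfolding A_def cyclic_part_def by auto
    have "(\<Sum>k=1..n. x' k) = t * k" "t * b \<le> (\<Sum>k=1..m. x' k)"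
      using prefix[of n] prefix[of m] sum_n sum_m by linarith+
    moreover have "card (A s) = card {j. j < (\<Sum>k=1..n. x' k) \<and> j mod t = s}"
      using card_cyclic_part_prefix[OF x'_le order.refl, of s] sub
      unfolding A_def by (simp add: Int_absorb2)
    moreover have "card (A s \<inter> {1..m}) = card {j. j < (\<Sum>k=1..m. x' k) \<and> j mod t = s}"
      using card_cyclic_part_prefix[OF x'_le m, of s] unfolding A_def .
    ultimately show ?thesis
      using sub card_residue_class_below_mult[OF s] card_residue_class_below_ge[OF s]
      unfolding prefix_rank_bases_def by simp
  qed
  have "(\<Sum>s<t. indvec (A s) i) = real_of_int (x i)" for i
  proof (cases "i \<in> {1..n}")
    case True
    have "(\<Sum>s<t. indvec (A s) i) = real (card {s \<in> {..<t}. i \<in> A s})"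
      unfolding indvec_def by (simp add: sum.If_cases Int_def)
    then show ?thesis
      using card_cyclic_part_member[OF t x'_le True] x_eq unfolding A_def by simp
  next
    case False
    then have "i \<notin> A s" for s unfolding A_def cyclic_part_def by auto
    then show ?thesis using x0[OF False] by (simp add: indvec_def)
  qed
  moreover have "(\<lambda>i. (\<Sum>s<t. indvec (A s) i) / real t) \<in> matroid_polytope (prefix_rank_bases n k m b)"
    unfolding matroid_polytope_def
  proof (rule average_in_conv_hull_fin[OF t])
    show "finite (indvec ` prefix_rank_bases n k m b)"
      unfolding prefix_rank_bases_def by (auto intro: finite_subset[of _ "Pow {1..n}"])
    show "(\<lambda>s. indvec (A s)) ` {..<t} \<subseteq> indvec ` prefix_rank_bases n k m b"
      using A_base by auto
  qed
  ultimately show ?thesis using t by (intro bexI) auto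
qed

lemma ehr_prefix_rank_bases:
  assumes "0 < t" "m \<le> n"
  shows "ehr n (prefix_rank_bases n k m b) t
       = card {x \<in> int_cube {1..n} t. sum x {1..n} = int (t * k) \<and> int (t * b) \<le> sum x {1..m}}"
  unfolding ehr_def
  by (intro arg_cong[where f = card] set_eqI iffI)
     (use lattice_point_of_dilate_in_int_cube in blast,
      use int_cube_point_in_dilate[OF assms] in \<open>auto simp: int_cube_def\<close>)

lemma ir_two_blocks:
  assumes "0 < b" "0 < t"
  shows "ir [a, b, c, d] t = card {x \<in> int_cube {1..a+b+c+d} t.
           sum x {1..a+b+c+d} = int (t * (b + d)) \<and> int (t * b) \<le> sum x {1..a+b}}"
proof -
  have n: "sum_list [a, b, c, d] = a + b + c + d" by simp
  have "ir [a, b, c, d] t = ehr (a+b+c+d) (prefix_rank_bases (a+b+c+d) (b+d) (a+b) b) t"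
    unfolding ir_def n schubert_bases_two_blocks[OF assms(1)] ..
  also have "\<dots> = card {x \<in> int_cube {1..a+b+c+d} t.
           sum x {1..a+b+c+d} = int (t * (b + d)) \<and> int (t * b) \<le> sum x {1..a+b}}"
    by (rule ehr_prefix_rank_bases[OF assms(2)]) simp
  finally show ?thesis .
qed

section \<open>Counting lattice points of a cube by their total\<close>

definition fps_ones :: "int fps" where
  "fps_ones = Abs_fps (\<lambda>_. 1)"

definition fps_geom :: "nat \<Rightarrow> int fps" where
  "fps_geom t = Abs_fps (\<lambda>v. if v \<le> t then 1 else 0)"

lemma fps_geom_eq: "fps_geom t = (1 - fps_X ^ (t + 1)) * fps_ones"
proof (rule fps_ext)
  fix n
  have "(1 - fps_X ^ (t + 1)) * fps_ones = fps_ones - fps_X ^ (t + 1) * fps_ones"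
    by (simp add: algebra_simps)
  moreover have "fps_nth (fps_X ^ (t + 1) * fps_ones) n = (if n < t + 1 then 0 else 1)"
    by (simp only: fps_X_power_mult_nth) (simp add: fps_ones_def)
  ultimately show "fps_nth (fps_geom t) n = fps_nth ((1 - fps_X ^ (t + 1)) * fps_ones) n"
    by (simp add: fps_geom_def fps_ones_def)
qed

lemma fps_ones_power_nth: "fps_nth (fps_ones ^ Suc N) s = int (N + s choose s)"
proof (induction N arbitrary: s)
  case 0
  then show ?case by (simp add: fps_ones_def)
next
  case (Suc N)
  have "fps_nth (fps_ones ^ Suc (Suc N)) s
      = (\<Sum>i=0..s. fps_nth fps_ones i * fps_nth (fps_ones ^ Suc N) (s - i))"
    by (simp only: power_Suc[of fps_ones "Suc N"] fps_mult_nth)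
  also have "\<dots> = (\<Sum>i=0..s. int (N + (s - i) choose (s - i)))"
    using Suc by (simp add: fps_ones_def)
  also have "\<dots> = int (\<Sum>i\<le>s. N + i choose i)"
    by (subst sum.atLeastAtMost_rev) (simp add: atLeast0AtMost)
  also have "\<dots> = int (Suc N + s choose s)"
    by (subst sum_choose_lower) simp
  finally show ?case .
qed

lemma one_minus_X_power_binomial:
  "(1 - fps_X ^ (t + 1) :: int fps) ^ N
     = (\<Sum>j\<le>N. fps_const ((-1) ^ j * int (N choose j)) * fps_X ^ ((t + 1) * j))"
proof -
  have "(1 - fps_X ^ (t + 1) :: int fps) = - (fps_X ^ (t + 1)) + 1"
    by (simp only: diff_conv_add_uminus add.commute)
  then have "(1 - fps_X ^ (t + 1) :: int fps) ^ N
      = (\<Sum>j\<le>N. of_nat (N choose j) * (- (fps_X ^ (t + 1))) ^ j * 1 ^ (N - j))"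
    by (simp only: binomial_ring)
  also have "\<dots> = (\<Sum>j\<le>N. fps_const ((-1) ^ j * int (N choose j)) * fps_X ^ ((t + 1) * j))"
  proof (rule sum.cong[OF refl])
    fix j
    have "(- (fps_X ^ (t + 1)) :: int fps) ^ j = (-1) ^ j * (fps_X ^ (t + 1)) ^ j"
      by (rule power_minus)
    also have "\<dots> = fps_const ((-1) ^ j) * fps_X ^ ((t + 1) * j)"
      by (metis power_mult fps_const_neg fps_const_power fps_const_1_eq_1)
    finally have power: "(- (fps_X ^ (t + 1)) :: int fps) ^ j
        = fps_const ((-1) ^ j) * fps_X ^ ((t + 1) * j)" .
    have const: "(of_nat (N choose j) :: int fps) = fps_const (int (N choose j))"
      by (simp only: fps_of_nat[symmetric] of_nat_id)
    show "of_nat (N choose j) * (- (fps_X ^ (t + 1))) ^ j * 1 ^ (N - j)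
        = fps_const ((-1) ^ j * int (N choose j)) * (fps_X ^ ((t + 1) * j) :: int fps)"
      unfolding power const power_one mult_1_right mult.assoc[symmetric] fps_const_mult
      by (simp only: mult.commute)
  qed
  finally show ?thesis .
qed

lemma fps_X_power_mult_fps_ones_power_nth:
  assumes "0 < N"
  shows "fps_nth (fps_X ^ r * fps_ones ^ N) s = binz (int s - int r + int N - 1) (int N - 1)"
proof (cases "s < r")
  case True
  then have "int s - int r + int N - 1 < int N - 1" by linarith
  then show ?thesis using True by (simp add: fps_X_power_mult_nth binz_def)
next
  case False
  obtain N' where N: "N = Suc N'" using assms not0_implies_Suc by blast
  define u where "u = s - r"
  have e1: "int s - int r + int N - 1 = int (N' + u)" and e2: "int N - 1 = int N'"
    using False N unfolding u_def by (simp_all add: of_nat_diff)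
  have "fps_nth (fps_X ^ r * fps_ones ^ N) s = fps_nth (fps_ones ^ Suc N') u"
    using False N unfolding u_def by (simp add: fps_X_power_mult_nth)
  also have "\<dots> = int (N' + u choose N')"
    unfolding fps_ones_power_nth using binomial_symmetric[of u "N' + u"] by simp
  also have "\<dots> = binz (int (N' + u)) (int N')"
    unfolding binz_def by (simp del: of_nat_add)
  finally show ?thesis unfolding e1 e2 .
qed

lemma fps_geom_power_nth:
  assumes "0 < N"
  shows "fps_nth (fps_geom t ^ N) s = (\<Sum>j=0..N. (-1) ^ j * int (N choose j) *
           binz (int s - int ((t + 1) * j) + int N - 1) (int N - 1))"
proof -
  have "fps_geom t ^ N
      = (\<Sum>j\<le>N. fps_const ((-1) ^ j * int (N choose j)) * (fps_X ^ ((t + 1) * j) * fps_ones ^ N))"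
    unfolding fps_geom_eq power_mult_distrib one_minus_X_power_binomial
    by (simp add: sum_distrib_right mult.assoc)
  then show ?thesis
    by (simp only: fps_sum_nth fps_mult_left_const_nth atLeast0AtMost
        fps_X_power_mult_fps_ones_power_nth[OF assms])
qed

lemma Ffun_eq_fps_geom_power_nth:
  assumes "0 < a + b"
  shows "Ffun a b 0 t = fps_nth (fps_geom t ^ (a + b)) (t * b)"
  unfolding fps_geom_power_nth[OF assms] Ffun_def
proof (rule sum.cong[OF refl])
  fix j
  have "(int t + 1) * (int b - int j) + int a + 0 - 1 = int (t * b) - int ((t + 1) * j) + int (a + b) - 1"
    by (simp add: algebra_simps)
  moreover have "int a + int b - 1 = int (a + b) - 1" by simp
  ultimately show "(-1) ^ j * int ((a + b) choose j) * binz ((int t + 1) * (int b - int j) + int a + 0 - 1) (int a + int b - 1)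
      = (-1) ^ j * int ((a + b) choose j) * binz (int (t * b) - int ((t + 1) * j) + int (a + b) - 1) (int (a + b) - 1)"
    by (simp only:)
qed

lemma finite_int_cube: "finite I \<Longrightarrow> finite (int_cube I t)"
  using finite_set_of_finite_funs[of I "{0..int t}" 0]
  by (rule_tac finite_subset[rotated]) (auto simp: int_cube_def)

lemma card_int_cube_level_insert:
  assumes "finite I" "i \<notin> I"
  shows "card {x \<in> int_cube (insert i I) t. sum x (insert i I) = int s}
       = (\<Sum>v \<in> {v. v \<le> t \<and> v \<le> s}. card {x \<in> int_cube I t. sum x I = int (s - v)})"
proof -
  define X where "X J s = {x \<in> int_cube J t. sum x J = int s}" for J s
  define V where "V = {v. v \<le> t \<and> v \<le> s}"
  have sum_upd: "(\<Sum>j\<in>I. if j = i then v else x j) = sum x I" for x v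
    using assms(2) by (intro sum.cong) auto
  have "bij_betw (\<lambda>x. (nat (x i), x(i := 0))) (X (insert i I) s) (SIGMA v:V. X I (s - v))"
  proof (rule bij_betw_byWitness[where f' = "\<lambda>(v, z). z(i := int v)"])
    show "\<forall>x\<in>X (insert i I) s. (\<lambda>(v, z). z(i := int v)) (nat (x i), x(i := 0)) = x"
      unfolding X_def int_cube_def by (auto simp: fun_eq_iff)
    show "\<forall>y\<in>(SIGMA v:V. X I (s - v)). (\<lambda>x. (nat (x i), x(i := 0))) ((\<lambda>(v, z). z(i := int v)) y) = y"
      unfolding X_def int_cube_def using assms(2) by (auto simp: fun_eq_iff)
    show "(\<lambda>x. (nat (x i), x(i := 0))) ` X (insert i I) s \<subseteq> (SIGMA v:V. X I (s - v))"
    proof (rule image_subsetI)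
      fix x assume x: "x \<in> X (insert i I) s"
      then have "x \<in> int_cube (insert i I) t" "x i + sum x I = int s"
        using assms unfolding X_def by simp_all
      moreover have "0 \<le> sum x I"
        using calculation(1) unfolding int_cube_def by (auto intro: sum_nonneg)
      ultimately show "(nat (x i), x(i := 0)) \<in> (SIGMA v:V. X I (s - v))"
        unfolding X_def V_def int_cube_def by (auto simp: sum_upd)
    qed
    show "(\<lambda>(v, z). z(i := int v)) ` (SIGMA v:V. X I (s - v)) \<subseteq> X (insert i I) s"
      using assms unfolding X_def V_def int_cube_def by (auto simp: sum_upd)
  qed
  then have "card (X (insert i I) s) = card (SIGMA v:V. X I (s - v))"
    by (rule bij_betw_same_card)
  also have "\<dots> = (\<Sum>v\<in>V. card (X I (s - v)))"
    using finite_int_cube[OF assms(1)] by (intro card_SigmaI) (auto simp: V_def X_def)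
  finally show ?thesis unfolding X_def V_def .
qed

lemma card_int_cube_level:
  assumes "finite I"
  shows "int (card {x \<in> int_cube I t. sum x I = int s}) = fps_nth (fps_geom t ^ card I) s"
  using assms
proof (induction I arbitrary: s rule: finite_induct)
  case empty
  have "{x \<in> int_cube {} t. sum x {} = int s} = (if s = 0 then {\<lambda>_. 0} else {})"
    by (auto simp: int_cube_def fun_eq_iff)
  then show ?case by simp
next
  case (insert i I)
  have "int (card {x \<in> int_cube (insert i I) t. sum x (insert i I) = int s})
      = (\<Sum>v \<in> {v. v \<le> t \<and> v \<le> s}. fps_nth (fps_geom t ^ card I) (s - v))"
    by (simp only: card_int_cube_level_insert[OF insert.hyps] of_nat_sum insert.IH)
  also have "\<dots> = (\<Sum>v=0..s. fps_nth (fps_geom t) v * fps_nth (fps_geom t ^ card I) (s - v))"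
    by (rule sum.mono_neutral_cong_left) (auto simp: fps_geom_def)
  also have "\<dots> = fps_nth (fps_geom t ^ card (insert i I)) s"
    using insert by (simp add: fps_mult_nth)
  finally show ?case .
qed

lemma card_int_cube_split:
  assumes "I \<inter> J = {}"
  shows "card {x \<in> int_cube (I \<union> J) t. sum x I = p \<and> sum x J = q}
       = card {x \<in> int_cube I t. sum x I = p} * card {x \<in> int_cube J t. sum x J = q}"
proof -
  define restr where "restr K x = (\<lambda>i. if i \<in> K then x i else (0 :: int))" for K :: "nat set" and x
  have sum_restr: "sum (restr K x) K = sum x K" for K x unfolding restr_def by simp
  have "bij_betw (\<lambda>x. (restr I x, restr J x))
      {x \<in> int_cube (I \<union> J) t. sum x I = p \<and> sum x J = q}
      ({x \<in> int_cube I t. sum x I = p} \<times> {x \<in> int_cube J t. sum x J = q})"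
  proof (rule bij_betw_byWitness[where f' = "\<lambda>(y, z) i. y i + z i"])
    show "\<forall>x\<in>{x \<in> int_cube (I \<union> J) t. sum x I = p \<and> sum x J = q}.
        (\<lambda>(y, z) i. y i + z i) (restr I x, restr J x) = x"
      using assms unfolding restr_def int_cube_def by (auto simp: fun_eq_iff)
    show "\<forall>y\<in>{x \<in> int_cube I t. sum x I = p} \<times> {x \<in> int_cube J t. sum x J = q}.
        (\<lambda>x. (restr I x, restr J x)) ((\<lambda>(y, z) i. y i + z i) y) = y"
      using assms unfolding restr_def int_cube_def by (auto simp: fun_eq_iff)
    show "(\<lambda>x. (restr I x, restr J x)) ` {x \<in> int_cube (I \<union> J) t. sum x I = p \<and> sum x J = q}
        \<subseteq> {x \<in> int_cube I t. sum x I = p} \<times> {x \<in> int_cube J t. sum x J = q}"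
      using sum_restr unfolding restr_def int_cube_def by auto
    show "(\<lambda>(y, z) i. y i + z i) ` ({x \<in> int_cube I t. sum x I = p} \<times> {x \<in> int_cube J t. sum x J = q})
        \<subseteq> {x \<in> int_cube (I \<union> J) t. sum x I = p \<and> sum x J = q}"
    proof clarify
      fix y z assume y: "y \<in> int_cube I t" and z: "z \<in> int_cube J t"
      have "sum z I = 0" "sum y J = 0"
        using y z assms unfolding int_cube_def by (auto intro!: sum.neutral)
      then show "(\<lambda>i. y i + z i) \<in> int_cube (I \<union> J) t \<and>
          sum (\<lambda>i. y i + z i) I = sum y I \<and> sum (\<lambda>i. y i + z i) J = sum z J"
        using y z assms unfolding int_cube_def by (auto simp: sum.distrib)
    qed
  qed
  then show ?thesis by (simp add: bij_betw_same_card card_cartesian_product)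
qed

lemma card_int_cube_complement:
  assumes "K \<subseteq> I"
  shows "card {x \<in> int_cube I t. sum x I = p \<and> q \<le> sum x K}
       = card {x \<in> int_cube I t. sum x I = int (card I * t) - p \<and> sum x K \<le> int (card K * t) - q}"
proof -
  define compl where "compl x = (\<lambda>i. if i \<in> I then int t - x i else 0)" for x :: "nat \<Rightarrow> int"
  have compl_cube: "compl x \<in> int_cube I t" "compl (compl x) = x" if "x \<in> int_cube I t" for x
    using that unfolding compl_def int_cube_def by (auto simp: fun_eq_iff)
  have sum_compl: "sum (compl x) J = int (card J * t) - sum x J" if "J \<subseteq> I" for x J
  proof -
    have "sum (compl x) J = (\<Sum>i\<in>J. int t - x i)"
      using that unfolding compl_def by (intro sum.cong) auto
    then show ?thesis by (simp add: sum_subtractf)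
  qed
  have "bij_betw compl {x \<in> int_cube I t. sum x I = p \<and> q \<le> sum x K}
      {x \<in> int_cube I t. sum x I = int (card I * t) - p \<and> sum x K \<le> int (card K * t) - q}"
    by (rule bij_betw_byWitness[where f' = compl])
       (auto simp: compl_cube sum_compl assms)
  then show ?thesis by (rule bij_betw_same_card)
qed

lemma ir_two_blocks_swapped:
  assumes "0 < a" "0 < t"
  shows "ir [b, a, d, c] t = card {x \<in> int_cube {1..a+b+c+d} t.
           sum x {1..a+b+c+d} = int (t * (b + d)) \<and> sum x {1..a+b} \<le> int (t * b)}"
proof -
  have "ir [b, a, d, c] t = card {x \<in> int_cube {1..a+b+c+d} t.
          sum x {1..a+b+c+d} = int (t * (a + c)) \<and> int (t * a) \<le> sum x {1..a+b}}"
    using ir_two_blocks[OF assms, of b d c] by (simp add: ac_simps)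
  also have "\<dots> = card {x \<in> int_cube {1..a+b+c+d} t.
          sum x {1..a+b+c+d} = int (t * (b + d)) \<and> sum x {1..a+b} \<le> int (t * b)}"
    by (subst card_int_cube_complement) (auto simp: algebra_simps)
  finally show ?thesis .
qed

lemma card_int_cube_prefix_level:
  assumes "m \<le> n"
  shows "int (card {x \<in> int_cube {1..n} t. sum x {1..n} = int (p + q) \<and> sum x {1..m} = int p})
       = fps_nth (fps_geom t ^ m) p * fps_nth (fps_geom t ^ (n - m)) q"
proof -
  have split: "{1..n} = {1..m} \<union> {m+1..n}" using assms by auto
  have "sum x {1..n} = sum x {1..m} + sum x {m+1..n}" for x :: "nat \<Rightarrow> int"
    unfolding split by (rule sum.union_disjoint) auto
  then have "{x \<in> int_cube {1..n} t. sum x {1..n} = int (p + q) \<and> sum x {1..m} = int p}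
      = {x \<in> int_cube ({1..m} \<union> {m+1..n}) t. sum x {1..m} = int p \<and> sum x {m+1..n} = int q}"
    unfolding split[symmetric] by auto
  then show ?thesis
    using card_int_cube_split[of "{1..m}" "{m+1..n}" t "int p" "int q"]
      card_int_cube_level[of "{1..m}" t p] card_int_cube_level[of "{m+1..n}" t q]
    by simp
qed

theorem theorem4p2:
  fixes a b c d t :: nat
  assumes "0 < a" "0 < b" "0 < c" "0 < d" "0 < t"
  shows "int (ir [a, b, c, d] t) + int (ir [b, a, d, c] t)
         = Ffun (a + c) (b + d) 0 t + Ffun a b 0 t * Ffun c d 0 t"
proof -
  define n where "n = a + b + c + d"
  define L where "L P = card {x \<in> int_cube {1..n} t.
                    sum x {1..n} = int (t * (b + d)) \<and> P (sum x {1..a+b})}" for P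
  have "ir [a, b, c, d] t = L (\<lambda>s. int (t * b) \<le> s)"
    unfolding L_def n_def by (rule ir_two_blocks[OF assms(2,5)])
  moreover have "ir [b, a, d, c] t = L (\<lambda>s. s \<le> int (t * b))"
    unfolding L_def n_def by (rule ir_two_blocks_swapped[OF assms(1,5)])
  moreover have "L (\<lambda>s. int (t * b) \<le> s) + L (\<lambda>s. s \<le> int (t * b))
      = L (\<lambda>_. True) + L (\<lambda>s. s = int (t * b))"
    unfolding L_def
    by (subst card_Un_Int[OF finite_subset[OF _ finite_int_cube] finite_subset[OF _ finite_int_cube]])
       (auto intro!: arg_cong2[where f = "(+)"] arg_cong[where f = card])
  moreover have "int (L (\<lambda>_. True)) = Ffun (a + c) (b + d) 0 t"
    using card_int_cube_level[of "{1..n}" t "t * (b + d)"]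
      Ffun_eq_fps_geom_power_nth[of "a + c" "b + d" t] assms
    unfolding L_def n_def by (simp add: ac_simps)
  moreover have "int (L (\<lambda>s. s = int (t * b))) = Ffun a b 0 t * Ffun c d 0 t"
    using card_int_cube_prefix_level[of "a + b" n t "t * b" "t * d"]
      Ffun_eq_fps_geom_power_nth[of a b t] Ffun_eq_fps_geom_power_nth[of c d t] assms
    unfolding L_def n_def by (simp add: algebra_simps)
  ultimately show ?thesis by (metis of_nat_add)
qed

end
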